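(* Let $\alpha\in(0,1)$ be irrational with continued fraction expansion $\alpha=[a_1,a_2,a_3,\dots]$ such that the sequence $(a_n)$ is bounded. Then for every $\lambda\in\mathbb{R}\setminus\{0\}$, every $\theta\in[0,1)$ and every $E\in\mathbb{C}$ the limit $$\gamma_\theta(E)=\lim_{n\to\infty}\frac{1}{n}\ln\|M(\lambda,E,v^n_{\alpha,\theta})\|$$ exists and is independent of $\theta$.
   Context: $\alpha=[a_1,a_2,\dots]$ means $\alpha=1/(a_1+1/(a_2+1/(a_3+\cdots)))$ with positive integers $a_n$. For $\theta\in[0,1)$ let $v_{\alpha,\theta}(n)=\chi_{[1-\alpha,1)}(n\alpha+\theta \bmod 1)$, $n\in\mathbb{Z}$, and let $v^n_{\alpha,\theta}$ denote the word $v_{\alpha,\theta}(1)\dots v_{\alpha,\theta}(n)$ over $\{0,1\}$. For $a\in\mathbb{R}$, $E\in\mathbb{C}$ let $T(\lambda,E,a)=\begin{pmatrix}E-\lambda a&-1\\1&0\end{pmatrix}$, and for a finite word $w=w_1\dots w_n$ over $\{0,1\}$ let $M(\lambda,E,w)=T(\lambda,E,w_n)\cdots T(\lambda,E,w_1)$. $\|\cdot\|$ is the operator norm on $2\times2$ complex matrices with respect to the Euclidean norm on $\mathbb{C}^2$. *)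

theory Defs
  imports "HOL-Analysis.Analysis"
begin

text \<open>Finite continued fraction [a_1,...,a_n] = 1/(a_1 + 1/(a_2 + ... + 1/a_n)),
  with the sequence a indexed from 1 (a 0 is ignored).\<close>
fun cfrac :: "(nat \<Rightarrow> nat) \<Rightarrow> nat \<Rightarrow> real" where
  "cfrac a 0 = 0"
| "cfrac a (Suc n) = 1 / (real (a 1) + cfrac (\<lambda>k. a (Suc k)) n)"

definition is_cf_expansion :: "real \<Rightarrow> (nat \<Rightarrow> nat) \<Rightarrow> bool" where
  "is_cf_expansion \<alpha> a \<longleftrightarrow> (\<forall>n\<ge>1. a n > 0) \<and> (\<lambda>n. cfrac a n) \<longlonglongrightarrow> \<alpha>"

definition vpot :: "real \<Rightarrow> real \<Rightarrow> int \<Rightarrow> real" where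
  "vpot \<alpha> \<theta> n = indicator {1 - \<alpha> ..< 1} (frac (of_int n * \<alpha> + \<theta>))"

definition vword :: "real \<Rightarrow> real \<Rightarrow> nat \<Rightarrow> real list" where
  "vword \<alpha> \<theta> n = map (\<lambda>k. vpot \<alpha> \<theta> (int k)) [1..<Suc n]"

definition Tmat :: "real \<Rightarrow> complex \<Rightarrow> real \<Rightarrow> complex^2^2" where
  "Tmat lam E x = vector [vector [E - complex_of_real (lam * x), -1], vector [1, 0]]"

text \<open>M(lambda,E,w_1...w_n) = T(w_n) ... T(w_1).\<close>
definition Mmat :: "real \<Rightarrow> complex \<Rightarrow> real list \<Rightarrow> complex^2^2" where
  "Mmat lam E w = fold (\<lambda>x A. Tmat lam E x ** A) w (mat 1)"

definition opnorm :: "complex^2^2 \<Rightarrow> real" where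
  "opnorm A = onorm (\<lambda>x. A *v x)"

end

theory Submission
  imports Defs
begin

text \<open>Since \<open>det T = 1\<close>, \<open>w \<mapsto> ln \<parallel>M(w)\<parallel>\<close> is a nonnegative subadditive function on
  words, so \<open>F\<^sub>n(\<theta>) = ln \<parallel>M(v\<^sup>n\<^sub>\<theta>)\<parallel>\<close> is a subadditive cocycle over the rotation
  \<open>\<theta> \<mapsto> \<theta> + \<alpha>\<close>. Bounded partial quotients make \<open>\<alpha>\<close> badly approximable, \<open>\<bar>d\<alpha> - p\<bar> \<ge> c/d\<close>,
  and this makes the coding linearly recurrent: all phases in an arc of length \<open>c/n\<close> share
  the word \<open>v\<^sup>n\<^sub>\<theta>\<close>, and the rotation visits that arc with frequency \<open>\<ge> c/(4n)\<close> at times that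
  are at least \<open>n\<close> apart. With \<open>\<gamma> = inf\<^sub>n sup\<^sub>\<theta> F\<^sub>n(\<theta>)/n\<close>, subadditivity gives
  \<open>F\<^sub>m \<le> (\<gamma> + \<epsilon>) m + O(1)\<close> uniformly; cutting an orbit segment of length \<open>N\<close> on which
  \<open>F\<^sub>N \<ge> \<gamma>N - 1\<close> at the occurrences of \<open>v\<^sup>n\<^sub>\<theta>\<close> then forces
  \<open>F\<^sub>n(\<theta>) \<ge> (\<gamma> - 8\<epsilon>/c) n - O(1)\<close>.\<close>

section \<open>Badly approximable numbers\<close>

definition badly_approximable :: "real \<Rightarrow> real \<Rightarrow> bool" where
  "badly_approximable c \<alpha> \<longleftrightarrow>
     (\<forall>(d::nat) (p::int). 1 \<le> d \<longrightarrow> c / real d \<le> \<bar>real d * \<alpha> - of_int p\<bar>)"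

lemma badly_approximableD:
  "badly_approximable c \<alpha> \<Longrightarrow> 1 \<le> d \<Longrightarrow> c / real d \<le> \<bar>real d * \<alpha> - of_int p\<bar>"
  by (simp add: badly_approximable_def)

lemma badly_approximable_int:
  assumes "badly_approximable c \<alpha>" "D \<noteq> 0"
  shows "c / of_int \<bar>D\<bar> \<le> \<bar>of_int D * \<alpha> - of_int P\<bar>"
proof (cases "D > 0")
  case True
  have "c / real (nat D) \<le> \<bar>real (nat D) * \<alpha> - of_int P\<bar>"
    using True by (intro badly_approximableD[OF assms(1)]) simp
  then show ?thesis using True by simp
next
  case False
  then have "D < 0" using assms(2) by simp
  have "c / real (nat (- D)) \<le> \<bar>real (nat (- D)) * \<alpha> - of_int (- P)\<bar>"
    using \<open>D < 0\<close> by (intro badly_approximableD[OF assms(1)]) simp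
  moreover have "\<bar>- of_int D * \<alpha> - of_int (- P)\<bar> = \<bar>of_int D * \<alpha> - of_int P\<bar>"
    by (simp add: abs_minus_commute algebra_simps)
  ultimately show ?thesis using \<open>D < 0\<close> by simp
qed

lemma badly_approximable_le_half:
  assumes "badly_approximable c \<alpha>"
  shows "c \<le> 1 / 2"
proof -
  have "c \<le> \<bar>\<alpha> - of_int (round \<alpha>)\<bar>" using badly_approximableD[OF assms, of 1] by simp
  then show ?thesis
    using of_int_round_abs_le[of \<alpha>] abs_minus_commute[of \<alpha> "of_int (round \<alpha>)"] by linarith
qed

lemma badly_approximable_irrational:
  assumes "badly_approximable c \<alpha>" "0 < c"
  shows "\<alpha> \<notin> \<rat>"
proof
  assume "\<alpha> \<in> \<rat>"
  then obtain p q where pq: "\<alpha> = of_int p / of_int q" "0 < q" by (rule Rats_cases')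
  have "c / real (nat q) \<le> \<bar>real (nat q) * \<alpha> - of_int p\<bar>"
    using pq(2) by (intro badly_approximableD[OF assms(1)]) simp
  then show False using pq assms(2) by (simp add: divide_le_0_iff)
qed

section \<open>Bounded partial quotients\<close>

lemma cfrac_bounds:
  assumes "\<forall>k\<ge>1. 0 < a k"
  shows "0 \<le> cfrac a n \<and> cfrac a n \<le> 1"
  using assms
proof (induction n arbitrary: a)
  case (Suc n)
  have "0 \<le> cfrac (\<lambda>k. a (Suc k)) n" using Suc by simp
  moreover have "1 \<le> a 1" using Suc.prems by (simp add: Suc_le_eq)
  ultimately show ?case by simp
qed simp

lemma is_cf_expansion_tail:
  assumes cf: "is_cf_expansion x a" and A: "\<And>n. a n \<le> A"
  shows "is_cf_expansion (1 / x - a 1) (\<lambda>k. a (Suc k))"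
    and "1 / (real A + 1) \<le> x" and "x \<le> 1" and "1 \<le> a 1"
proof -
  have pos: "\<forall>k\<ge>1. 0 < a k" and "(\<lambda>n. cfrac a n) \<longlonglongrightarrow> x"
    using cf by (auto simp: is_cf_expansion_def)
  from this(2) have lim: "(\<lambda>n. cfrac a (Suc n)) \<longlonglongrightarrow> x" by (rule LIMSEQ_Suc)
  have tail_pos: "\<forall>k\<ge>1. 0 < a (Suc k)" using pos by auto
  show a1: "1 \<le> a 1" using pos by (simp add: Suc_le_eq)
  have tail: "0 \<le> cfrac (\<lambda>k. a (Suc k)) n" "cfrac (\<lambda>k. a (Suc k)) n \<le> 1" for n
    using cfrac_bounds[OF tail_pos] by auto
  have "1 / (real A + 1) \<le> cfrac a (Suc n)" for n
    using tail[of n] A[of 1] a1 by (simp add: frac_le)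
  then show lower: "1 / (real A + 1) \<le> x" by (intro LIMSEQ_le_const[OF lim]) auto
  have "cfrac a (Suc n) \<le> 1" for n using cfrac_bounds[OF pos] by blast
  then show "x \<le> 1" by (intro LIMSEQ_le_const2[OF lim]) blast
  have "0 < 1 / (real A + 1)" by simp
  then have "x \<noteq> 0" using lower by linarith
  have "(\<lambda>n. 1 / cfrac a (Suc n) - a 1) \<longlonglongrightarrow> 1 / x - a 1"
    by (intro tendsto_intros lim \<open>x \<noteq> 0\<close>)
  moreover have "(\<lambda>n. cfrac (\<lambda>k. a (Suc k)) n) = (\<lambda>n. 1 / cfrac a (Suc n) - a 1)"
    using tail a1 by (intro ext) simp
  ultimately have "(\<lambda>n. cfrac (\<lambda>k. a (Suc k)) n) \<longlonglongrightarrow> 1 / x - a 1" by (simp only:)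
  then show "is_cf_expansion (1 / x - a 1) (\<lambda>k. a (Suc k))"
    using tail_pos by (simp add: is_cf_expansion_def)
qed

lemma approximation_bound_base:
  fixes A x :: real and d :: nat and p :: int
  assumes "0 \<le> A" "1 / (A + 2) \<le> x" "1 / (A + 2) \<le> 1 - x" "1 \<le> d" "p \<le> 0 \<or> int d \<le> p"
  shows "1 / (4 * (A + 1)\<^sup>2) \<le> (real d - 1 / 2) * \<bar>real d * x - of_int p\<bar>"
proof -
  have "0 < 1 / (A + 2)" using assms(1) by simp
  then have "real d * x - of_int p \<ge> x" if "p \<le> 0"
    using that assms(2,4) mult_right_mono[of 1 "real d" x] by linarith
  moreover have "of_int p - real d * x \<ge> 1 - x" if "int d \<le> p"
  proof -
    have "x \<le> 1" using assms(3) \<open>0 < 1 / (A + 2)\<close> by linarith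
    then have "(1 - x) * 1 \<le> (1 - x) * real d" using assms(4) by (intro mult_left_mono) auto
    then have "1 - x \<le> real d - real d * x" by (simp add: algebra_simps)
    moreover have "real d \<le> of_int p" using that by (metis of_int_le_iff of_int_of_nat_eq)
    ultimately show ?thesis by linarith
  qed
  ultimately have dist: "1 / (A + 2) \<le> \<bar>real d * x - of_int p\<bar>" using assms(2,3,5) by linarith
  have "2 * (A + 2) \<le> 4 * (A + 1)\<^sup>2" using assms(1) by (simp add: power2_eq_square algebra_simps)
  then have "1 / (4 * (A + 1)\<^sup>2) \<le> 1 / 2 * (1 / (A + 2))" using assms(1) by (simp add: frac_le)
  also have "\<dots> \<le> (real d - 1 / 2) * \<bar>real d * x - of_int p\<bar>"
    using dist assms(1,4) by (intro mult_mono) auto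
  finally show ?thesis .
qed

text \<open>In the induction below \<open>x = 1/s\<close> with \<open>s = a\<^sub>1 + b\<close>, \<open>b\<close> the value of the tail expansion.
  An approximation \<open>d x \<approx> p\<close> with \<open>0 < p < d\<close> comes from the approximation
  \<open>p b \<approx> p' = d - p a\<^sub>1\<close> with error \<open>y = p b - p'\<close>: then \<open>d = p s - y\<close> and
  \<open>\<bar>d x - p\<bar> = \<bar>y\<bar>/s\<close>.\<close>

lemma approximation_bound_step:
  fixes t s y p d :: real
  assumes "1 \<le> t" "1 + 1 / t \<le> s" "s \<le> t" "1 \<le> d" "d = p * s - y"
    and IH: "1 / (4 * t\<^sup>2) \<le> (p - 1 / 2) * \<bar>y\<bar>"
  shows "1 / (4 * t\<^sup>2) \<le> (d - 1 / 2) * (\<bar>y\<bar> / s)"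
proof -
  have "0 < 1 / t" using assms(1) by simp
  then have "1 < s" using assms(2) by linarith
  consider "\<bar>y\<bar> \<le> 1 / (2 * t)" | "1 / (2 * t) < \<bar>y\<bar>" by linarith
  then show ?thesis
  proof cases
    case 1
    then have "y \<le> (s - 1) / 2" using assms(2) by (simp add: field_simps)
    have "(d - 1 / 2) * (\<bar>y\<bar> / s) = (p - 1 / 2) * \<bar>y\<bar> + \<bar>y\<bar> * ((s - 1) / 2 - y) / s"
      using \<open>1 < s\<close> by (simp add: assms(5) field_simps)
    also have "\<dots> \<ge> (p - 1 / 2) * \<bar>y\<bar>"
      using \<open>y \<le> (s - 1) / 2\<close> \<open>1 < s\<close> by simp
    finally show ?thesis using IH by linarith
  next
    case 2
    have "1 / (2 * t) / t \<le> \<bar>y\<bar> / t" using 2 assms(1) by (intro divide_right_mono) auto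
    also have "\<dots> \<le> \<bar>y\<bar> / s" using \<open>1 < s\<close> assms(3) by (simp add: frac_le)
    finally have "1 / 2 * (1 / (2 * t) / t) \<le> (d - 1 / 2) * (\<bar>y\<bar> / s)"
      using assms(4) by (intro mult_mono) auto
    then show ?thesis by (simp add: power2_eq_square)
  qed
qed

lemma cf_expansion_approximation_bound:
  assumes "is_cf_expansion x a" "\<And>n. a n \<le> A" "1 \<le> d"
  shows "1 / (4 * (real A + 1)\<^sup>2) \<le> (real d - 1 / 2) * \<bar>real d * x - of_int p\<bar>"
  using assms
proof (induction d arbitrary: x a p rule: less_induct)
  case (less d)
  define b where "b = 1 / x - a 1"
  define s where "s = a 1 + b"
  note x = is_cf_expansion_tail[OF less.prems(1,2)]
  have b_cf: "is_cf_expansion b (\<lambda>k. a (Suc k))" using x(1) by (simp add: b_def)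
  note b = is_cf_expansion_tail[OF b_cf less.prems(2)]
  have "real (a 1) \<le> real A" using less.prems(2)[of 1] by simp
  then have s: "1 + 1 / (real A + 1) \<le> s" "s \<le> real A + 1"
    using x(4) b(2,3) by (auto simp: s_def)
  have "0 < 1 / (real A + 1)" by simp
  then have "0 < x" using x(2) by linarith
  then have xs: "x = 1 / s" and "0 < s" by (simp_all add: s_def b_def)
  consider "p \<le> 0 \<or> int d \<le> p" | "0 < p" "p < int d" by linarith
  then show ?case
  proof cases
    case 1
    have "1 / (real A + 2) \<le> 1 / (real A + 1)" by (simp add: field_simps)
    then have x_lo: "1 / (real A + 2) \<le> x" using x(2) by linarith
    have "real A + 2 \<le> (real A + 1) * s" using s(1) by (simp add: field_simps)
    then have "(real A + 2) * x \<le> real A + 1" using \<open>0 < s\<close> by (simp add: xs field_simps)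
    then have x_hi: "1 / (real A + 2) \<le> 1 - x" by (simp add: field_simps)
    show ?thesis using approximation_bound_base[OF _ x_lo x_hi less.prems(3) 1] by simp
  next
    case 2
    define p' where "p' = int d - p * int (a 1)"
    define y where "y = of_int p * b - of_int p'"
    have "1 / (4 * (real A + 1)\<^sup>2) \<le> (real (nat p) - 1 / 2) * \<bar>real (nat p) * b - of_int p'\<bar>"
      using 2 less.prems(2) by (intro less.IH[OF _ b_cf]) auto
    then have IH: "1 / (4 * (real A + 1)\<^sup>2) \<le> (of_int p - 1 / 2) * \<bar>y\<bar>"
      using 2 by (simp add: y_def)
    have d: "real d = of_int p * s - y" by (simp add: y_def p'_def s_def algebra_simps)
    have "real d * x - of_int p = - y / s" using \<open>0 < s\<close> by (simp add: xs d field_simps)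
    then have "\<bar>real d * x - of_int p\<bar> = \<bar>y\<bar> / s" using \<open>0 < s\<close> by (simp add: abs_divide)
    then show ?thesis
      using approximation_bound_step[OF _ s _ d IH] less.prems(3) by simp
  qed
qed

lemma badly_approximable_if_bounded_cf_expansion:
  assumes "is_cf_expansion x a" "\<And>n. a n \<le> A"
  shows "badly_approximable (1 / (4 * (real A + 1)\<^sup>2)) x"
  unfolding badly_approximable_def
proof (intro allI impI)
  fix d :: nat and p :: int assume "1 \<le> d"
  then have "0 < real d" by simp
  have "1 / (4 * (real A + 1)\<^sup>2) \<le> (real d - 1 / 2) * \<bar>real d * x - of_int p\<bar>"
    by (rule cf_expansion_approximation_bound[OF assms \<open>1 \<le> d\<close>])
  also have "\<dots> \<le> real d * \<bar>real d * x - of_int p\<bar>" by (intro mult_right_mono) auto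
  also have "\<dots> = \<bar>real d * x - of_int p\<bar> * real d" by (rule mult.commute)
  finally show "1 / (4 * (real A + 1)\<^sup>2) / real d \<le> \<bar>real d * x - of_int p\<bar>"
    by (rule mult_imp_div_pos_le[OF \<open>0 < real d\<close>])
qed

section \<open>Sturmian words\<close>

lemma length_vword [simp]: "length (vword \<alpha> \<theta> n) = n"
  by (simp add: vword_def)

lemma set_vword_subset: "set (vword \<alpha> \<theta> n) \<subseteq> {0, 1}"
  by (auto simp: vword_def vpot_def indicator_def)

lemma vword_add: "vword \<alpha> \<theta> (n + m) = vword \<alpha> \<theta> n @ vword \<alpha> (\<theta> + real n * \<alpha>) m"
proof -
  have shift: "vpot \<alpha> \<theta> (int (n + k)) = vpot \<alpha> (\<theta> + real n * \<alpha>) (int k)" for k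
    unfolding vpot_def by (simp add: algebra_simps)
  show ?thesis
  proof (rule nth_equalityI)
    fix i assume "i < length (vword \<alpha> \<theta> (n + m))"
    then show "vword \<alpha> \<theta> (n + m) ! i = (vword \<alpha> \<theta> n @ vword \<alpha> (\<theta> + real n * \<alpha>) m) ! i"
      using shift[of "Suc i - n"] by (auto simp: vword_def nth_append nth_map_upt add_diff_eq simp del: upt_Suc)
  qed simp
qed

lemma vword_add_of_int [simp]: "vword \<alpha> (\<theta> + of_int z) n = vword \<alpha> \<theta> n"
proof -
  have "vpot \<alpha> (\<theta> + of_int z) k = vpot \<alpha> \<theta> k" for k
    unfolding vpot_def using frac_add_of_int_right[of "of_int k * \<alpha> + \<theta>" z]
    by (simp add: add.assoc)
  then show ?thesis by (simp add: vword_def)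
qed

lemma vpot_eq_floor_diff:
  assumes "0 < \<alpha>" "\<alpha> < 1"
  shows "vpot \<alpha> \<theta> k = of_int (\<lfloor>of_int (k + 1) * \<alpha> + \<theta>\<rfloor> - \<lfloor>of_int k * \<alpha> + \<theta>\<rfloor>)"
proof -
  define y where "y = of_int k * \<alpha> + \<theta>"
  have "of_int (k + 1) * \<alpha> + \<theta> = of_int \<lfloor>y\<rfloor> + (frac y + \<alpha>)"
    by (simp add: y_def frac_def algebra_simps)
  moreover have "0 \<le> frac y" "frac y < 1" by (auto simp: frac_lt_1)
  ultimately have "\<lfloor>of_int (k + 1) * \<alpha> + \<theta>\<rfloor> = \<lfloor>y\<rfloor> + (if 1 - \<alpha> \<le> frac y then 1 else 0)"
    using assms by (auto intro!: floor_unique)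
  then show ?thesis by (simp add: vpot_def y_def[symmetric] indicator_def frac_lt_1)
qed

lemma vword_eq_if_floors_eq:
  assumes "0 < \<alpha>" "\<alpha> < 1"
    and "\<And>k. k \<in> {1..n + 1} \<Longrightarrow> \<lfloor>real k * \<alpha> + s\<rfloor> = \<lfloor>real k * \<alpha> + \<theta>\<rfloor>"
  shows "vword \<alpha> s n = vword \<alpha> \<theta> n"
  unfolding vword_def
proof (rule map_cong[OF refl])
  fix k assume "k \<in> set [1..<Suc n]"
  then have "k \<in> {1..n + 1}" "k + 1 \<in> {1..n + 1}" by auto
  from assms(3)[OF this(1)] assms(3)[OF this(2)]
  show "vpot \<alpha> s (int k) = vpot \<alpha> \<theta> (int k)"
    by (simp add: vpot_eq_floor_diff[OF assms(1,2)] add.commute)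
qed

lemma frac_orbit_spread:
  assumes "badly_approximable c \<alpha>" "0 < c" "1 \<le> n" "i \<in> {1..n + 1}" "j \<in> {1..n + 1}"
  shows "frac (real i * \<alpha> + \<theta>) - frac (real j * \<alpha> + \<theta>) \<le> 1 - c / real n"
proof (cases "i = j")
  case True
  have "c \<le> real n" using badly_approximable_le_half[OF assms(1)] assms(3) by linarith
  then show ?thesis using True assms(3) by (simp add: divide_le_eq)
next
  case False
  define D where "D = int i - int j"
  define P where "P = 1 + \<lfloor>real i * \<alpha> + \<theta>\<rfloor> - \<lfloor>real j * \<alpha> + \<theta>\<rfloor>"
  have "1 - (frac (real i * \<alpha> + \<theta>) - frac (real j * \<alpha> + \<theta>)) = - (of_int D * \<alpha> - of_int P)"
    by (simp add: frac_def D_def P_def algebra_simps)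
  moreover have "0 \<le> 1 - (frac (real i * \<alpha> + \<theta>) - frac (real j * \<alpha> + \<theta>))"
    using frac_lt_1[of "real i * \<alpha> + \<theta>"] frac_ge_0[of "real j * \<alpha> + \<theta>"] by linarith
  moreover have "c / real n \<le> c / of_int \<bar>D\<bar>"
    using False assms(2,4,5) by (intro divide_left_mono) (auto simp: D_def)
  moreover have "c / of_int \<bar>D\<bar> \<le> \<bar>of_int D * \<alpha> - of_int P\<bar>"
    using False by (intro badly_approximable_int[OF assms(1)]) (simp add: D_def)
  ultimately show ?thesis by linarith
qed

definition in_arc :: "real \<Rightarrow> real \<Rightarrow> real \<Rightarrow> bool" where
  "in_arc u l y \<longleftrightarrow> (\<exists>z::int. u \<le> y + of_int z \<and> y + of_int z < u + l)"

lemma vword_cylinder: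
  assumes "0 < \<alpha>" "\<alpha> < 1" "badly_approximable c \<alpha>" "0 < c" "1 \<le> n"
  obtains u where "\<And>s. in_arc u (c / real n) s \<Longrightarrow> vword \<alpha> s n = vword \<alpha> \<theta> n"
proof -
  define \<phi> where "\<phi> k = frac (real k * \<alpha> + \<theta>)" for k :: nat
  obtain m where "m \<in> \<phi> ` {1..n + 1}" "\<not> (\<exists>y \<in> \<phi> ` {1..n + 1}. y < m)"
    using ex_min_if_finite[of "\<phi> ` {1..n + 1}"] by auto
  then obtain j where j: "j \<in> {1..n + 1}" "\<And>k. k \<in> {1..n + 1} \<Longrightarrow> \<phi> j \<le> \<phi> k"
    by (metis imageE image_eqI not_le)
  show ?thesis
  proof (rule that[of "\<theta> - \<phi> j"])
    fix s assume "in_arc (\<theta> - \<phi> j) (c / real n) s"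
    then obtain z :: int where z: "\<theta> - \<phi> j \<le> s + of_int z" "s + of_int z < \<theta> - \<phi> j + c / real n"
      by (auto simp: in_arc_def)
    have "\<lfloor>real k * \<alpha> + (s + of_int z)\<rfloor> = \<lfloor>real k * \<alpha> + \<theta>\<rfloor>" if k: "k \<in> {1..n + 1}" for k
    proof -
      have "real k * \<alpha> + (s + of_int z) = of_int \<lfloor>real k * \<alpha> + \<theta>\<rfloor> + (\<phi> k + (s + of_int z - \<theta>))"
        by (simp add: \<phi>_def frac_def)
      moreover have "\<phi> k - \<phi> j \<le> 1 - c / real n"
        unfolding \<phi>_def by (rule frac_orbit_spread[OF assms(3-5) k j(1)])
      ultimately show ?thesis using z j(2)[OF k] by (intro floor_unique) auto
    qed
    then have "vword \<alpha> (s + of_int z) n = vword \<alpha> \<theta> n"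
      by (rule vword_eq_if_floors_eq[OF assms(1,2)])
    then show "vword \<alpha> s n = vword \<alpha> \<theta> n" by simp
  qed
qed

lemma in_arc_returns_separated:
  assumes "badly_approximable c \<alpha>" "0 < c" "l \<le> c / real n"
    and "in_arc u l (s + real j * \<alpha>)" "in_arc u l (s + real j' * \<alpha>)" "j < j'"
  shows "j + n \<le> j'"
proof (rule ccontr)
  assume "\<not> j + n \<le> j'"
  define d where "d = j' - j"
  have d: "1 \<le> d" "d < n" using assms(6) \<open>\<not> j + n \<le> j'\<close> by (auto simp: d_def)
  obtain z z' :: int where
    "u \<le> s + real j * \<alpha> + of_int z" "s + real j * \<alpha> + of_int z < u + l"
    "u \<le> s + real j' * \<alpha> + of_int z'" "s + real j' * \<alpha> + of_int z' < u + l"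
    using assms(4,5) by (auto simp: in_arc_def)
  moreover have "real j' = real j + real d" using assms(6) by (simp add: d_def)
  ultimately have "\<bar>real d * \<alpha> - of_int (z - z')\<bar> < l" by (simp add: algebra_simps abs_less_iff)
  moreover have "c / real d \<le> \<bar>real d * \<alpha> - of_int (z - z')\<bar>"
    by (rule badly_approximableD[OF assms(1) d(1)])
  moreover have "c / real n < c / real d" using assms(2) d by (intro divide_strict_left_mono) auto
  ultimately show False using assms(3) by linarith
qed

text \<open>Steps of length \<open>q\<close> advance the orbit by \<open>frac (q \<alpha>) \<le> l\<close> modulo 1, so they cannot jump
  over an arc of length \<open>l\<close>.\<close>

lemma rotation_enters_arc:
  assumes "0 < frac (real q * \<alpha>)" "frac (real q * \<alpha>) \<le> l"
  shows "\<exists>k \<le> nat \<lceil>1 / frac (real q * \<alpha>)\<rceil>. in_arc u l (x + real (k * q) * \<alpha>)"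
proof -
  define \<eta> where "\<eta> = frac (real q * \<alpha>)"
  define t where "t = frac (u - x)"
  define k where "k = nat \<lceil>t / \<eta>\<rceil>"
  have \<eta>: "0 < \<eta>" "\<eta> \<le> l" using assms by (simp_all add: \<eta>_def)
  have t: "0 \<le> t" "t < 1" by (simp_all add: t_def frac_lt_1)
  then have k: "real k = of_int \<lceil>t / \<eta>\<rceil>" using \<eta> by (simp add: k_def)
  have "t / \<eta> \<le> real k" "real k < t / \<eta> + 1" using k ceiling_correct[of "t / \<eta>"] by linarith+
  then have "t \<le> real k * \<eta>" "real k * \<eta> < t + \<eta>" using \<eta>(1) by (simp_all add: field_simps)
  moreover have "x + real (k * q) * \<alpha> + of_int (\<lfloor>u - x\<rfloor> - int k * \<lfloor>real q * \<alpha>\<rfloor>)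
      = u - t + real k * \<eta>"
    by (simp add: \<eta>_def t_def frac_def algebra_simps)
  ultimately have "in_arc u l (x + real (k * q) * \<alpha>)"
    using \<eta>(2) unfolding in_arc_def by (intro exI[of _ "\<lfloor>u - x\<rfloor> - int k * \<lfloor>real q * \<alpha>\<rfloor>"]) auto
  moreover have "k \<le> nat \<lceil>1 / \<eta>\<rceil>"
    unfolding k_def using t \<eta> by (intro nat_mono ceiling_mono) (simp add: divide_right_mono)
  ultimately show ?thesis by (auto simp: \<eta>_def)
qed

text \<open>In a block of \<open>W = q (R + 1)\<close> consecutive times, each of the \<open>q\<close> first times reaches a
  visit within \<open>R\<close> steps of length \<open>q\<close>; these \<open>q\<close> visits differ modulo \<open>q\<close>.\<close>

lemma card_visits_ge:
  assumes "1 \<le> q" and visit: "\<And>x. \<exists>k \<le> R. P (x + real (k * q) * \<alpha>)"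
  shows "q * (m div (q * (R + 1))) \<le> card {j. j < m \<and> P (s + real j * \<alpha>)}"
proof -
  define W where "W = q * (R + 1)"
  define kf where "kf x = (SOME k. k \<le> R \<and> P (x + real (k * q) * \<alpha>))" for x
  have kf: "kf x \<le> R" "P (x + real (kf x * q) * \<alpha>)" for x
    using someI_ex[OF visit[of x]] by (auto simp: kf_def)
  define g where "g = (\<lambda>(i, b). b * W + i + kf (s + real (b * W + i) * \<alpha>) * q)"
  have W: "W = R * q + q" by (simp add: W_def algebra_simps)
  have offset: "i + kf x * q < W" if "i < q" for i x
    using that W mult_le_mono1[OF kf(1), of x q] by linarith
  have "0 < W" using \<open>1 \<le> q\<close> by (simp add: W_def)
  have g_div_mod: "g (i, b) div W = b" "g (i, b) mod q = i" if "i < q" for i b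
  proof -
    let ?k = "kf (s + real (b * W + i) * \<alpha>)"
    have "g (i, b) = b * W + (i + ?k * q)" by (simp add: g_def)
    then show "g (i, b) div W = b" using offset[OF that] \<open>0 < W\<close> by simp
    have "g (i, b) = i + (b * (R + 1) + ?k) * q" by (simp add: g_def W_def algebra_simps)
    then show "g (i, b) mod q = i" using that by simp
  qed
  have "inj_on g ({..<q} \<times> {..<m div W})"
    by (rule inj_onI) (metis SigmaE g_div_mod lessThan_iff)
  moreover have "g ` ({..<q} \<times> {..<m div W}) \<subseteq> {j. j < m \<and> P (s + real j * \<alpha>)}"
  proof
    fix j assume "j \<in> g ` ({..<q} \<times> {..<m div W})"
    then obtain i b where ib: "i < q" "b < m div W" and j: "j = g (i, b)" by auto
    define x where "x = s + real (b * W + i) * \<alpha>"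
    have "g (i, b) < Suc b * W" using offset[OF ib(1), of x] by (simp add: g_def x_def)
    also have "\<dots> \<le> m div W * W" using ib(2) by (intro mult_le_mono1) simp
    also have "\<dots> \<le> m" by (simp add: div_times_less_eq_dividend)
    finally have "j < m" by (simp add: j)
    moreover have "s + real j * \<alpha> = x + real (kf x * q) * \<alpha>"
      by (simp add: j g_def x_def algebra_simps)
    ultimately show "j \<in> {j. j < m \<and> P (s + real j * \<alpha>)}" using kf(2)[of x] by simp
  qed
  ultimately have "card ({..<q} \<times> {..<m div W}) \<le> card {j. j < m \<and> P (s + real j * \<alpha>)}"
    by (intro card_inj_on_le) auto
  then show ?thesis by (simp add: W_def)
qed

lemma rotation_returns_to_arc:
  assumes "\<alpha> \<notin> \<rat>" "0 < l" "l \<le> 1"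
  obtains q R :: nat where "1 \<le> q" "(real R + 1) * l \<le> 4"
    "\<And>x. \<exists>k \<le> R. in_arc u l (x + real (k * q) * \<alpha>)"
proof -
  obtain q where q: "0 < q" "\<bar>frac (real q * \<alpha>) - 3 * l / 4\<bar> < l / 4"
    using Kronecker_approx_1_explicit[OF assms(1), of "3 * l / 4" "l / 4"] assms by auto
  define \<eta> where "\<eta> = frac (real q * \<alpha>)"
  have \<eta>: "l / 2 < \<eta>" "\<eta> < l" using q(2) unfolding \<eta>_def abs_less_iff by linarith+
  define R where "R = nat \<lceil>1 / \<eta>\<rceil>"
  have "real R = of_int \<lceil>1 / \<eta>\<rceil>" using \<eta> assms(2) by (simp add: R_def)
  then have "real R < 1 / \<eta> + 1" using ceiling_correct[of "1 / \<eta>"] by linarith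
  then have "real R * l < (1 / \<eta> + 1) * l" using assms(2) by (rule mult_strict_right_mono)
  moreover have "(1 / \<eta> + 1) * l = l / \<eta> + l" by (simp add: field_simps)
  moreover have "l / \<eta> < 2" using \<eta> assms(2) by (simp add: field_simps)
  ultimately have R: "(real R + 1) * l \<le> 4" using assms(3) by (simp add: distrib_right)
  have "0 < frac (real q * \<alpha>)" "frac (real q * \<alpha>) \<le> l"
    using \<eta> assms(2) unfolding \<eta>_def by linarith+
  then have visit: "\<exists>k \<le> R. in_arc u l (x + real (k * q) * \<alpha>)" for x
    unfolding R_def \<eta>_def by (rule rotation_enters_arc)
  from q(1) have "1 \<le> q" by simp
  then show ?thesis using R visit by (rule that)
qed

lemma arc_visits_frequent:
  assumes "\<alpha> \<notin> \<rat>" "0 < l" "l \<le> 1"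
  obtains q :: nat where
    "\<And>s m. real m * l / 4 - real q \<le> real (card {j. j < m \<and> in_arc u l (s + real j * \<alpha>)})"
proof -
  obtain q R where q: "1 \<le> q" and R: "(real R + 1) * l \<le> 4"
    and visit: "\<And>x. \<exists>k \<le> R. in_arc u l (x + real (k * q) * \<alpha>)"
    using rotation_returns_to_arc[OF assms] by metis
  show ?thesis
  proof (rule that[of q])
    fix s m
    define W where "W = q * (R + 1)"
    have "real m * ((real R + 1) * l) \<le> real m * 4" using R by (intro mult_left_mono) auto
    then have mR: "real m * l / 4 * (real R + 1) \<le> real m" by (simp add: algebra_simps)
    have "m < (m div W + 1) * W" using q by (simp add: W_def dividend_less_div_times)
    then have "real m < real ((m div W + 1) * W)" by (simp only: of_nat_less_iff)
    also have "\<dots> = (real q * real (m div W) + real q) * (real R + 1)"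
      by (simp add: W_def algebra_simps)
    finally have "real m * l / 4 * (real R + 1) < (real q * real (m div W) + real q) * (real R + 1)"
      using mR by linarith
    then have "real m * l / 4 < real q * real (m div W) + real q"
      by (rule mult_right_less_imp_less) simp
    moreover have "q * (m div W) \<le> card {j. j < m \<and> in_arc u l (s + real j * \<alpha>)}"
      unfolding W_def using q visit by (rule card_visits_ge)
    ultimately show "real m * l / 4 - real q \<le> real (card {j. j < m \<and> in_arc u l (s + real j * \<alpha>)})"
      by (simp flip: of_nat_mult)
  qed
qed

lemma vword_occurs_frequently:
  assumes "0 < \<alpha>" "\<alpha> < 1" "badly_approximable c \<alpha>" "0 < c" "1 \<le> n"
  obtains q :: nat where
    "\<And>s m. \<exists>J \<subseteq> {..<m}. real m * c / (4 * real n) - real q \<le> real (card J)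
      \<and> (\<forall>j\<in>J. vword \<alpha> (s + real j * \<alpha>) n = vword \<alpha> \<theta> n)
      \<and> (\<forall>j\<in>J. \<forall>j'\<in>J. j < j' \<longrightarrow> j + n \<le> j')"
proof -
  define l where "l = c / real n"
  have l: "0 < l" "l \<le> 1"
    using assms(4,5) badly_approximable_le_half[OF assms(3)] by (auto simp: l_def field_simps)
  obtain u where u: "\<And>s. in_arc u l s \<Longrightarrow> vword \<alpha> s n = vword \<alpha> \<theta> n"
    using vword_cylinder[OF assms] unfolding l_def by metis
  obtain q where q: "\<And>s m. real m * l / 4 - real q \<le> real (card {j. j < m \<and> in_arc u l (s + real j * \<alpha>)})"
    using arc_visits_frequent[OF badly_approximable_irrational[OF assms(3,4)] l] by metis
  show ?thesis
  proof (rule that[of q], intro exI conjI)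
    fix s m
    let ?J = "{j. j < m \<and> in_arc u l (s + real j * \<alpha>)}"
    show "?J \<subseteq> {..<m}" by auto
    show "real m * c / (4 * real n) - real q \<le> real (card ?J)" using q[of m s] by (simp add: l_def)
    show "\<forall>j\<in>?J. vword \<alpha> (s + real j * \<alpha>) n = vword \<alpha> \<theta> n" using u by auto
    show "\<forall>j\<in>?J. \<forall>j'\<in>?J. j < j' \<longrightarrow> j + n \<le> j'"
      using in_arc_returns_separated[OF assms(3,4), of l n u s] by (auto simp: l_def)
  qed
qed

section \<open>Subadditive functions on Sturmian words\<close>

lemma LIMSEQ_divide_of_nat_if_error_bound:
  fixes x :: "nat \<Rightarrow> real"
  assumes "\<And>\<epsilon>. 0 < \<epsilon> \<Longrightarrow> \<exists>B. \<forall>n\<ge>1. \<bar>x n - \<gamma> * real n\<bar> \<le> \<epsilon> * real n + B"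
  shows "(\<lambda>n. x n / real n) \<longlonglongrightarrow> \<gamma>"
proof (rule LIMSEQ_I)
  fix r :: real assume "0 < r"
  then obtain B where B: "\<And>n. 1 \<le> n \<Longrightarrow> \<bar>x n - \<gamma> * real n\<bar> \<le> r / 2 * real n + B"
    using assms[of "r / 2"] by auto
  show "\<exists>n0. \<forall>n\<ge>n0. norm (x n / real n - \<gamma>) < r"
  proof (intro exI allI impI)
    fix n assume n: "nat \<lceil>2 * \<bar>B\<bar> / r\<rceil> + 1 \<le> n"
    then have "2 * \<bar>B\<bar> / r < real n" by linarith
    then have "B < r / 2 * real n" using \<open>0 < r\<close> by (simp add: field_simps)
    then have "\<bar>x n - \<gamma> * real n\<bar> < r * real n" using B[of n] n by linarith
    moreover have "x n / real n - \<gamma> = (x n - \<gamma> * real n) / real n" using n by (simp add: field_simps)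
    ultimately show "norm (x n / real n - \<gamma>) < r"
      using n by (simp add: abs_divide divide_less_eq)
  qed
qed

locale subadditive_word_function =
  fixes g :: "real list \<Rightarrow> real" and K :: real
  assumes subadditive: "g (u @ w) \<le> g u + g w"
    and nonneg: "0 \<le> g w"
    and le_length: "set w \<subseteq> {0, 1} \<Longrightarrow> g w \<le> K * real (length w)"
begin

abbreviation cocycle :: "real \<Rightarrow> nat \<Rightarrow> real \<Rightarrow> real" where
  "cocycle \<alpha> n \<theta> \<equiv> g (vword \<alpha> \<theta> n)"

lemma K_nonneg: "0 \<le> K"
  using nonneg[of "[0]"] le_length[of "[0]"] by simp

lemma cocycle_add_le: "cocycle \<alpha> (n + m) \<theta> \<le> cocycle \<alpha> n \<theta> + cocycle \<alpha> m (\<theta> + real n * \<alpha>)"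
  by (simp add: vword_add subadditive)

lemma cocycle_le: "cocycle \<alpha> n \<theta> \<le> K * real n"
  using le_length[OF set_vword_subset] by simp

lemma cocycle_le_blocks:
  assumes "\<And>s. cocycle \<alpha> n s \<le> G"
  shows "cocycle \<alpha> (q * n + r) s \<le> real q * G + K * real r"
proof (induction q arbitrary: s)
  case 0
  then show ?case using cocycle_le by simp
next
  case (Suc q)
  have "cocycle \<alpha> (Suc q * n + r) s \<le> cocycle \<alpha> n s + cocycle \<alpha> (q * n + r) (s + real n * \<alpha>)"
    using cocycle_add_le[where n = n and m = "q * n + r"] by (simp add: add.assoc)
  also have "\<dots> \<le> G + (real q * G + K * real r)" using assms Suc.IH by (intro add_mono)
  finally show ?case by (simp add: algebra_simps)
qed

definition growth_rate :: "real \<Rightarrow> real" where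
  "growth_rate \<alpha> = (INF n\<in>{1..}. (SUP \<theta>. cocycle \<alpha> n \<theta>) / real n)"

lemma cocycle_le_SUP: "cocycle \<alpha> n \<theta> \<le> (SUP \<theta>. cocycle \<alpha> n \<theta>)"
  by (rule cSUP_upper) (auto intro!: bdd_aboveI cocycle_le)

lemma bdd_below_normalized_SUP: "bdd_below ((\<lambda>n. (SUP \<theta>. cocycle \<alpha> n \<theta>) / real n) ` {1..})"
  using order_trans[OF nonneg cocycle_le_SUP] by (intro bdd_belowI2[of _ 0]) simp

lemma growth_rate_nonneg: "0 \<le> growth_rate \<alpha>"
  unfolding growth_rate_def using order_trans[OF nonneg cocycle_le_SUP]
  by (intro cINF_greatest) auto

lemma exists_cocycle_gt_growth_rate:
  assumes "1 \<le> N"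
  shows "\<exists>\<theta>. growth_rate \<alpha> * real N - 1 < cocycle \<alpha> N \<theta>"
proof -
  have "growth_rate \<alpha> \<le> (SUP \<theta>. cocycle \<alpha> N \<theta>) / real N"
    unfolding growth_rate_def using assms by (intro cINF_lower bdd_below_normalized_SUP) simp
  then have "growth_rate \<alpha> * real N - 1 < (SUP \<theta>. cocycle \<alpha> N \<theta>)"
    using assms by (simp add: field_simps)
  then show ?thesis by (subst (asm) less_cSUP_iff) (auto intro!: bdd_aboveI cocycle_le)
qed

lemma cocycle_le_growth_rate:
  assumes "0 < \<epsilon>"
  obtains B where "0 \<le> B" "\<And>m s. cocycle \<alpha> m s \<le> (growth_rate \<alpha> + \<epsilon>) * real m + B"
proof -
  have "(INF n\<in>{1..}. (SUP \<theta>. cocycle \<alpha> n \<theta>) / real n) < growth_rate \<alpha> + \<epsilon>"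
    using assms by (simp add: growth_rate_def)
  moreover have "{1::nat..} \<noteq> {}" by auto
  ultimately obtain n where n: "1 \<le> n" "(SUP \<theta>. cocycle \<alpha> n \<theta>) / real n < growth_rate \<alpha> + \<epsilon>"
    using cINF_less_iff[OF _ bdd_below_normalized_SUP] by fastforce
  then have "(SUP \<theta>. cocycle \<alpha> n \<theta>) < (growth_rate \<alpha> + \<epsilon>) * real n"
    by (simp add: divide_less_eq)
  then have G: "cocycle \<alpha> n s \<le> (growth_rate \<alpha> + \<epsilon>) * real n" for s
    using cocycle_le_SUP[where \<alpha> = \<alpha> and n = n and \<theta> = s] by linarith
  have "cocycle \<alpha> m s \<le> (growth_rate \<alpha> + \<epsilon>) * real m + K * real n" for m s
  proof -
    have "cocycle \<alpha> (m div n * n + m mod n) s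
        \<le> real (m div n) * ((growth_rate \<alpha> + \<epsilon>) * real n) + K * real (m mod n)"
      by (rule cocycle_le_blocks[OF G])
    also have "real (m div n) * ((growth_rate \<alpha> + \<epsilon>) * real n) \<le> (growth_rate \<alpha> + \<epsilon>) * real m"
      using growth_rate_nonneg[of \<alpha>] assms div_times_less_eq_dividend[of m n]
      by (simp add: mult.commute mult.left_commute mult_left_mono flip: of_nat_mult)
    also have "K * real (m mod n) \<le> K * real n"
      using n(1) K_nonneg by (intro mult_left_mono) auto
    finally show ?thesis by simp
  qed
  then show ?thesis using that[of "K * real n"] K_nonneg n(1) by simp
qed

lemma cocycle_le_occurrences:
  assumes UB: "\<And>m s. cocycle \<alpha> m s \<le> \<gamma> * real m + B" and "0 \<le> B" and "finite J"
    and occ: "\<And>j. j \<in> J \<Longrightarrow> j + n \<le> N \<and> cocycle \<alpha> n (s + real j * \<alpha>) = X"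
    and sep: "\<And>j j'. j \<in> J \<Longrightarrow> j' \<in> J \<Longrightarrow> j < j' \<Longrightarrow> j + n \<le> j'"
  shows "cocycle \<alpha> N s
    \<le> \<gamma> * (real N - real n * real (card J)) + B * (real (card J) + 1) + real (card J) * X"
  using \<open>finite J\<close> occ sep
proof (induction J arbitrary: N rule: finite_linorder_max_induct)
  case empty
  then show ?case using UB by simp
next
  case (insert b J)
  define r where "r = N - (b + n)"
  have N: "N = b + (n + r)" using insert.prems(1)[of b] by (simp add: r_def)
  have "cocycle \<alpha> b s
      \<le> \<gamma> * (real b - real n * real (card J)) + B * (real (card J) + 1) + real (card J) * X"
    using insert by (intro insert.IH) auto
  moreover have "cocycle \<alpha> N s
      \<le> cocycle \<alpha> b s + cocycle \<alpha> n (s + real b * \<alpha>) + cocycle \<alpha> r (s + real b * \<alpha> + real n * \<alpha>)"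
    unfolding N using cocycle_add_le[where \<alpha> = \<alpha> and n = b and m = "n + r" and \<theta> = s]
      cocycle_add_le[where \<alpha> = \<alpha> and n = n and m = r and \<theta> = "s + real b * \<alpha>"] by linarith
  moreover have "cocycle \<alpha> n (s + real b * \<alpha>) = X" using insert.prems(1) by simp
  moreover have "card (insert b J) = card J + 1" using insert(1,2) by auto
  ultimately show ?case
    using UB[where m = r and s = "s + real b * \<alpha> + real n * \<alpha>"] by (simp add: N algebra_simps)
qed

lemma cocycle_ge_growth_rate:
  assumes "0 < \<alpha>" "\<alpha> < 1" "badly_approximable c \<alpha>" "0 < c"
    and UB: "\<And>m s. cocycle \<alpha> m s \<le> (growth_rate \<alpha> + \<epsilon>) * real m + B" and "0 \<le> B" "0 \<le> \<epsilon>"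
    and "1 \<le> n"
  shows "growth_rate \<alpha> * real n - 8 * \<epsilon> * real n / c - 1 - 2 * B \<le> cocycle \<alpha> n \<theta>"
proof -
  let ?\<gamma> = "growth_rate \<alpha>"
  define l where "l = c / real n"
  have l: "0 < l" "l \<le> 1"
    using assms(4,8) badly_approximable_le_half[OF assms(3)] by (auto simp: l_def field_simps)
  obtain q where q: "\<And>s m. \<exists>J \<subseteq> {..<m}. real m * c / (4 * real n) - real q \<le> real (card J)
      \<and> (\<forall>j\<in>J. vword \<alpha> (s + real j * \<alpha>) n = vword \<alpha> \<theta> n)
      \<and> (\<forall>j\<in>J. \<forall>j'\<in>J. j < j' \<longrightarrow> j + n \<le> j')"
    using vword_occurs_frequently[OF assms(1-4,8)] by metis
  define m where "m = nat \<lceil>8 * (real q + real n) / l\<rceil>"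
  have "8 * (real q + real n) / l \<le> real m" unfolding m_def by (rule real_nat_ceiling_ge)
  then have m: "8 * real q + 8 * real n \<le> real m * l" using l by (simp add: divide_le_eq distrib_left)
  obtain \<theta>' where \<theta>': "?\<gamma> * real (m + n) - 1 < cocycle \<alpha> (m + n) \<theta>'"
    using exists_cocycle_gt_growth_rate[where N = "m + n"] assms(8) by auto
  obtain J where J: "J \<subseteq> {..<m}" "real m * l / 4 - real q \<le> real (card J)"
    "\<And>j. j \<in> J \<Longrightarrow> cocycle \<alpha> n (\<theta>' + real j * \<alpha>) = cocycle \<alpha> n \<theta>"
    "\<And>j j'. j \<in> J \<Longrightarrow> j' \<in> J \<Longrightarrow> j < j' \<Longrightarrow> j + n \<le> j'"
    using q[where s = \<theta>' and m = m] by (auto simp: l_def)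
  define k where "k = real (card J)"
  have "real n * l \<le> real n" "1 \<le> real n" using l(2) assms(8) by (simp_all add: mult_left_le)
  then have "real m * l + real n * l \<le> 8 * k" "1 \<le> k" using J(2) m k_def by linarith+
  then have k: "real (m + n) * l \<le> 8 * k" "1 \<le> k" by (simp_all add: algebra_simps)
  have "cocycle \<alpha> (m + n) \<theta>'
      \<le> (?\<gamma> + \<epsilon>) * (real (m + n) - real n * k) + B * (k + 1) + k * cocycle \<alpha> n \<theta>"
    unfolding k_def using J(1) by (intro cocycle_le_occurrences[OF UB \<open>0 \<le> B\<close>])
      (auto intro: finite_subset J(3,4))
  moreover have "\<epsilon> * real (m + n) \<le> \<epsilon> * (8 * k * real n / c)"
    using k(1) assms(4,7,8) by (intro mult_left_mono) (auto simp: l_def field_simps)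
  moreover have "0 \<le> \<epsilon> * (real n * k)" using assms(7) k(2) by simp
  moreover have "B * 1 \<le> B * k" using assms(6) k(2) by (intro mult_left_mono)
  ultimately have "k * (?\<gamma> * real n - 8 * \<epsilon> * real n / c - 1 - 2 * B) < k * cocycle \<alpha> n \<theta>"
    using \<theta>' k(2) by (simp add: algebra_simps)
  then show ?thesis using k(2) by simp
qed

theorem cocycle_tendsto_growth_rate:
  assumes "0 < \<alpha>" "\<alpha> < 1" "badly_approximable c \<alpha>" "0 < c"
  shows "(\<lambda>n. cocycle \<alpha> n \<theta> / real n) \<longlonglongrightarrow> growth_rate \<alpha>"
proof (rule LIMSEQ_divide_of_nat_if_error_bound)
  fix \<epsilon> :: real assume "0 < \<epsilon>"
  then obtain B where B: "0 \<le> B" "\<And>m s. cocycle \<alpha> m s \<le> (growth_rate \<alpha> + \<epsilon> * c / 8) * real m + B"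
    using cocycle_le_growth_rate[where \<epsilon> = "\<epsilon> * c / 8" and \<alpha> = \<alpha>] assms(4) by auto
  have "\<bar>cocycle \<alpha> n \<theta> - growth_rate \<alpha> * real n\<bar> \<le> \<epsilon> * real n + (1 + 2 * B)" if "1 \<le> n" for n
  proof -
    have "\<epsilon> * c / 8 \<le> \<epsilon>" using \<open>0 < \<epsilon>\<close> badly_approximable_le_half[OF assms(3)] by simp
    then have "\<epsilon> * c / 8 * real n \<le> \<epsilon> * real n" by (rule mult_right_mono) simp
    moreover have "growth_rate \<alpha> * real n - 8 * (\<epsilon> * c / 8) * real n / c - 1 - 2 * B \<le> cocycle \<alpha> n \<theta>"
      using \<open>0 < \<epsilon>\<close> assms that by (intro cocycle_ge_growth_rate[OF _ _ _ _ B(2) B(1)]) auto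
    ultimately show ?thesis
      using B(2)[where m = n and s = \<theta>] B(1) assms(4) by (simp add: algebra_simps abs_le_iff)
  qed
  then show "\<exists>B. \<forall>n\<ge>1. \<bar>cocycle \<alpha> n \<theta> - growth_rate \<alpha> * real n\<bar> \<le> \<epsilon> * real n + B" by blast
qed

end

section \<open>Transfer matrices\<close>

lemma norm_vec2: "norm (x :: complex^2) = sqrt ((cmod (x$1))\<^sup>2 + (cmod (x$2))\<^sup>2)"
  by (simp add: norm_vec_def L2_set_def UNIV_2)

lemma norm_matrix_vector_le_opnorm: "norm (A *v x) \<le> opnorm A * norm x"
  unfolding opnorm_def by (rule onorm) simp

lemma opnorm_nonneg: "0 \<le> opnorm A"
  unfolding opnorm_def by (rule onorm_pos_le) simp

lemma opnorm_matrix_mul_le: "opnorm (A ** B) \<le> opnorm A * opnorm B"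
proof -
  have "(\<lambda>x. (A ** B) *v x) = (\<lambda>x. A *v x) \<circ> (\<lambda>x. B *v x)"
    by (auto simp: matrix_vector_mul_assoc)
  then show ?thesis
    unfolding opnorm_def by (metis onorm_compose matrix_vector_mul_bounded_linear)
qed

lemma cmod_det_le_opnorm_squared: "cmod (det (A :: complex^2^2)) \<le> opnorm A ^ 2"
proof -
  define u where "u = A *v axis 1 1"
  define v where "v = A *v axis 2 1"
  have col: "u$1 = A$1$1" "u$2 = A$2$1" "v$1 = A$1$2" "v$2 = A$2$2"
    by (simp_all add: u_def v_def matrix_vector_mult_def axis_def UNIV_2)
  have "norm (axis 1 (1::complex) :: complex^2) = 1" "norm (axis 2 (1::complex) :: complex^2) = 1"
    by (simp_all add: norm_vec2 axis_def)
  then have uv: "norm u \<le> opnorm A" "norm v \<le> opnorm A"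
    using norm_matrix_vector_le_opnorm[of A "axis 1 1"] norm_matrix_vector_le_opnorm[of A "axis 2 1"]
    by (simp_all add: u_def v_def)
  have "cmod (det A) = cmod (u$1 * v$2 - v$1 * u$2)" by (simp add: det_2 col)
  also have "\<dots> \<le> cmod (u$1) * cmod (v$2) + cmod (u$2) * cmod (v$1)"
    using norm_triangle_ineq4[of "u$1 * v$2" "v$1 * u$2"] by (simp add: norm_mult mult.commute)
  also have "\<dots> \<le> norm u * norm v"
    using norm_cauchy_schwarz[of "(cmod (u$1), cmod (u$2))" "(cmod (v$2), cmod (v$1))"]
    by (simp add: norm_prod_def norm_vec2 add.commute)
  also have "\<dots> \<le> opnorm A * opnorm A" using uv opnorm_nonneg by (intro mult_mono) auto
  finally show ?thesis by (simp add: power2_eq_square)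
qed

lemma Mmat_Nil [simp]: "Mmat lam E [] = mat 1"
  by (simp add: Mmat_def)

lemma Mmat_append: "Mmat lam E (u @ w) = Mmat lam E w ** Mmat lam E u"
proof -
  have fold: "fold (\<lambda>x A. Tmat lam E x ** A) w B = Mmat lam E w ** B" for B :: "complex^2^2"
  proof (induction w arbitrary: B rule: rev_induct)
    case (snoc x w)
    have "fold (\<lambda>x A. Tmat lam E x ** A) (w @ [x]) B = Tmat lam E x ** (Mmat lam E w ** B)"
      using snoc.IH by simp
    moreover have "Mmat lam E (w @ [x]) = Tmat lam E x ** Mmat lam E w" by (simp add: Mmat_def)
    ultimately show ?case by (simp add: matrix_mul_assoc)
  qed simp
  have "Mmat lam E (u @ w) = fold (\<lambda>x A. Tmat lam E x ** A) w (Mmat lam E u)"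
    by (simp add: Mmat_def)
  then show ?thesis by (simp only: fold)
qed

lemma Mmat_single: "Mmat lam E [x] = Tmat lam E x"
  by (simp add: Mmat_def)

lemma det_Tmat: "det (Tmat lam E x) = 1"
  by (simp add: Tmat_def det_2)

lemma det_Mmat: "det (Mmat lam E w) = 1"
  by (induction w rule: rev_induct) (simp_all add: Mmat_append Mmat_single det_mul det_Tmat)

lemma one_le_opnorm_Mmat: "1 \<le> opnorm (Mmat lam E w)"
proof -
  have "1\<^sup>2 \<le> opnorm (Mmat lam E w) ^ 2"
    using cmod_det_le_opnorm_squared[of "Mmat lam E w"] by (simp add: det_Mmat)
  then show ?thesis using opnorm_nonneg by (rule power2_le_imp_le)
qed

definition letter_bound :: "real \<Rightarrow> complex \<Rightarrow> real" where
  "letter_bound lam E = max (opnorm (Tmat lam E 0)) (opnorm (Tmat lam E 1))"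

lemma opnorm_Mmat_le_power:
  assumes "set w \<subseteq> {0, 1}"
  shows "opnorm (Mmat lam E w) \<le> letter_bound lam E ^ length w"
  using assms
proof (induction w rule: rev_induct)
  case Nil
  have "opnorm (mat 1) \<le> 1" unfolding opnorm_def by (rule onorm_le) simp
  then show ?case by simp
next
  case (snoc x w)
  have "opnorm (Mmat lam E (w @ [x])) \<le> opnorm (Tmat lam E x) * opnorm (Mmat lam E w)"
    by (simp add: Mmat_append Mmat_single opnorm_matrix_mul_le)
  also have "\<dots> \<le> letter_bound lam E * letter_bound lam E ^ length w"
    using snoc opnorm_nonneg[of "Tmat lam E x"] opnorm_nonneg[of "Mmat lam E w"]
    by (intro mult_mono) (auto simp: letter_bound_def)
  finally show ?case by simp
qed

lemma subadditive_word_function_ln_opnorm_Mmat: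
  "subadditive_word_function (\<lambda>w. ln (opnorm (Mmat lam E w))) (ln (letter_bound lam E))"
proof unfold_locales
  have pos: "0 < opnorm (Mmat lam E w)" for w
    using one_le_opnorm_Mmat[of lam E w] by linarith
  fix u w :: "real list"
  have "ln (opnorm (Mmat lam E (u @ w))) \<le> ln (opnorm (Mmat lam E w) * opnorm (Mmat lam E u))"
    using pos[of "u @ w"] by (intro ln_mono) (simp_all add: Mmat_append opnorm_matrix_mul_le)
  then show "ln (opnorm (Mmat lam E (u @ w))) \<le> ln (opnorm (Mmat lam E u)) + ln (opnorm (Mmat lam E w))"
    using pos by (simp add: ln_mult_pos)
  show "0 \<le> ln (opnorm (Mmat lam E w))"
    using one_le_opnorm_Mmat by simp
  assume "set w \<subseteq> {0, 1}"
  have "ln (opnorm (Mmat lam E w)) \<le> ln (letter_bound lam E ^ length w)"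
    by (rule ln_mono[OF opnorm_Mmat_le_power[OF \<open>set w \<subseteq> {0, 1}\<close>] pos])
  also have "\<dots> = ln (letter_bound lam E) * real (length w)"
    by (simp add: ln_realpow)
  finally show "ln (opnorm (Mmat lam E w)) \<le> ln (letter_bound lam E) * real (length w)" .
qed

theorem theorem2:
  fixes \<alpha> :: real and a :: "nat \<Rightarrow> nat"
  assumes "0 < \<alpha>" "\<alpha> < 1" "\<alpha> \<notin> \<rat>"
    and "is_cf_expansion \<alpha> a"
    and "bounded (range a)"
  shows "\<forall>lam::real. lam \<noteq> 0 \<longrightarrow> (\<forall>E::complex. \<exists>\<gamma>::real. \<forall>\<theta>\<in>{0..<1}.
           (\<lambda>n. ln (opnorm (Mmat lam E (vword \<alpha> \<theta> n))) / real n) \<longlonglongrightarrow> \<gamma>)"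
proof (intro allI impI)
  fix lam :: real and E :: complex
  obtain B where "\<And>n. real (a n) \<le> B" using assms(5) by (auto simp: bounded_iff)
  then have A: "a n \<le> nat \<lceil>B\<rceil>" for n by (metis ceiling_mono ceiling_of_nat nat_int nat_mono)
  interpret subadditive_word_function "\<lambda>w. ln (opnorm (Mmat lam E w))" "ln (letter_bound lam E)"
    by (rule subadditive_word_function_ln_opnorm_Mmat)
  show "\<exists>\<gamma>. \<forall>\<theta>\<in>{0..<1}. (\<lambda>n. ln (opnorm (Mmat lam E (vword \<alpha> \<theta> n))) / real n) \<longlonglongrightarrow> \<gamma>"
    using cocycle_tendsto_growth_rate[OF assms(1,2) badly_approximable_if_bounded_cf_expansion[OF assms(4) A]]
    by auto
qed

end
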